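(* Let $Y\subseteq\mathbb{R}$ be a Delone set. Let $\psi:\mathbb{N}\to[0,\infty)$ be any function, and let $\alpha$ be a real number with $|\alpha|>1$. If $\sum_{n=1}^\infty \psi(n)<\infty$, then for Lebesgue-almost every $x\in\mathbb{R}$ there are only finitely many pairs $(n,y)$ with $n\in\mathbb{N}$ and $y\in Y$ such that $|\alpha^n x - y|\le \psi(n)$. On the other hand, if $\sum_{n=1}^\infty \psi(n)=\infty$, then for Lebesgue-almost every $x\in\mathbb{R}$ there are infinitely many pairs $(n,y)$ with $n\in\mathbb{N}$ and $y\in Y$ such that $|\alpha^n x - y|\le \psi(n)$.
   Context: A Delone set in $\mathbb{R}$ is a set $Y\subseteq\mathbb{R}$ that is uniformly discrete and relatively dense: there exist $r>0$ (packing radius) such that distinct points of $Y$ are at distance at least $2r$ from each other (equivalently, closed balls of radius $r$ around points of $Y$ have pairwise disjoint interiors), and $R>0$ (covering radius) such that every closed ball of radius $R$ in $\mathbb{R}$ contains a point of $Y$. Here $\mathbb{N}=\{1,2,3,\dots\}$. *)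

theory Defs
  imports "HOL-Analysis.Analysis"
begin

definition uniformly_discrete :: "real set \<Rightarrow> bool" where
  "uniformly_discrete Y \<longleftrightarrow>
     (\<exists>r>0. \<forall>y\<in>Y. \<forall>y'\<in>Y. y \<noteq> y' \<longrightarrow> dist y y' \<ge> 2 * r)"

definition relatively_dense :: "real set \<Rightarrow> bool" where
  "relatively_dense Y \<longleftrightarrow> (\<exists>R>0. \<forall>z. cball z R \<inter> Y \<noteq> {})"

definition delone :: "real set \<Rightarrow> bool" where
  "delone Y \<longleftrightarrow> uniformly_discrete Y \<and> relatively_dense Y"

definition approx_pairs :: "real set \<Rightarrow> (nat \<Rightarrow> real) \<Rightarrow> real \<Rightarrow> real \<Rightarrow> (nat \<times> real) set" where
  "approx_pairs Y \<psi> \<alpha> x = {(n, y). n \<ge> 1 \<and> y \<in> Y \<and> \<bar>\<alpha> ^ n * x - y\<bar> \<le> \<psi> n}"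

end

theory Submission
  imports Defs
begin

text \<open>Let \<open>E\<^sub>n\<close> be the set of \<open>x\<close> such that \<open>\<alpha>\<^sup>n x\<close> lies within \<open>\<psi> n\<close> of \<open>Y\<close>. It is the
  \<open>\<psi> n / \<bar>\<alpha>\<bar>\<^sup>n\<close>-neighbourhood of the Delone set \<open>Y / \<alpha>\<^sup>n\<close>, whose points are spaced at scale
  \<open>\<bar>\<alpha>\<bar>\<^sup>-\<^sup>n\<close>, so on an interval of length \<open>L\<close> it has measure of order \<open>L \<psi> n\<close> up to
  boundary terms; the convergent case is then Borel--Cantelli. In the divergent case, after
  truncating \<open>\<psi>\<close> at half the packing radius, the sets at two scales \<open>m < n\<close> are nearly
  independent: \<open>E\<^sub>m \<inter> E\<^sub>n\<close> has measure at most \<open>L \<psi> m \<psi> n / r\<^sup>2\<close> plus an error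
  \<open>O(\<psi> n (\<bar>\<alpha>\<bar>\<^sup>m\<^sup>-\<^sup>n + \<bar>\<alpha>\<bar>\<^sup>-\<^sup>m))\<close>, which sums to \<open>O(\<psi> n)\<close> over \<open>m < n\<close>. The Chung--Erdos
  inequality then shows that every tail \<open>\<Union>n\<ge>k. E\<^sub>n\<close> fills a fixed proportion of every interval,
  hence so does the limsup set, and such a set has full measure by a Vitali covering argument.\<close>

definition separated :: "real \<Rightarrow> real set \<Rightarrow> bool" where
  "separated s Z \<longleftrightarrow> (\<forall>z\<in>Z. \<forall>w\<in>Z. z \<noteq> w \<longrightarrow> s \<le> \<bar>z - w\<bar>)"

definition covering :: "real \<Rightarrow> real set \<Rightarrow> bool" where
  "covering S Z \<longleftrightarrow> (\<forall>x. \<exists>z\<in>Z. \<bar>z - x\<bar> \<le> S)"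

lemma separatedD: "separated s Z \<Longrightarrow> z \<in> Z \<Longrightarrow> w \<in> Z \<Longrightarrow> z \<noteq> w \<Longrightarrow> s \<le> \<bar>z - w\<bar>"
  unfolding separated_def by blast

lemma inj_on_floor_separated:
  assumes "separated s Z" "s > 0"
  shows "inj_on (\<lambda>z. \<lfloor>(z - p) / s\<rfloor>) Z"
proof (rule inj_onI)
  fix z w assume z: "z \<in> Z" and w: "w \<in> Z" and eq: "\<lfloor>(z - p) / s\<rfloor> = \<lfloor>(w - p) / s\<rfloor>"
  have "\<bar>(z - p) / s - (w - p) / s\<bar> < 1"
    using eq by linarith
  then have "\<bar>z - w\<bar> < s"
    using \<open>s > 0\<close> by (simp add: diff_divide_distrib[symmetric] abs_divide pos_divide_less_eq)
  then show "z = w"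
    using separatedD[OF assms(1) z w] by fastforce
qed

lemma card_separated_Int_Icc_le:
  assumes sep: "separated s Z" and s: "s > 0" and pq: "p \<le> q"
  shows "finite (Z \<inter> {p..q})" "real (card (Z \<inter> {p..q})) \<le> (q - p) / s + 1"
proof -
  let ?f = "\<lambda>z. \<lfloor>(z - p) / s\<rfloor>"
  let ?N = "nat \<lfloor>(q - p) / s\<rfloor>"
  have inj: "inj_on (nat \<circ> ?f) (Z \<inter> {p..q})"
  proof (rule comp_inj_on)
    show "inj_on ?f (Z \<inter> {p..q})"
      using inj_on_floor_separated[OF sep s] by (rule inj_on_subset) simp
    show "inj_on nat (?f ` (Z \<inter> {p..q}))"
      using s by (intro inj_onI) (auto simp: eq_nat_nat_iff)
  qed
  have into: "(nat \<circ> ?f) ` (Z \<inter> {p..q}) \<subseteq> {0..?N}"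
    using s by (auto intro!: nat_mono floor_mono divide_right_mono)
  show "finite (Z \<inter> {p..q})"
    using inj into by (rule inj_on_finite) simp
  have "card (Z \<inter> {p..q}) \<le> ?N + 1"
    using card_inj_on_le[OF inj into] by simp
  moreover have "real ?N \<le> (q - p) / s"
    using pq s by (simp add: of_nat_nat)
  ultimately show "real (card (Z \<inter> {p..q})) \<le> (q - p) / s + 1"
    by linarith
qed

lemma finite_separated_Int_Icc:
  assumes "separated s Z" "s > 0"
  shows "finite (Z \<inter> {p..q})"
  using card_separated_Int_Icc_le(1)[OF assms] by (cases "p \<le> q") auto

lemma countable_separated:
  assumes "separated s Z" "s > 0"
  shows "countable Z"
proof -
  have "Z \<subseteq> (\<Union>k::nat. Z \<inter> {- real k..real k})"
  proof
    fix z assume "z \<in> Z"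
    moreover obtain k where "\<bar>z\<bar> \<le> real k" using real_arch_simple by blast
    ultimately show "z \<in> (\<Union>k::nat. Z \<inter> {- real k..real k})"
      by (intro UN_I[of k]) (auto simp: abs_le_iff)
  qed
  moreover have "countable (\<Union>k::nat. Z \<inter> {- real k..real k})"
    by (intro countable_UN) (simp_all add: countable_finite finite_separated_Int_Icc[OF assms])
  ultimately show ?thesis by (rule countable_subset)
qed

lemma card_covering_Int_Icc_ge:
  assumes fin: "finite (Z \<inter> {p..q})" and cov: "covering S Z" and S: "S > 0" and pq: "p \<le> q"
  shows "(q - p) / (3 * S) - 1 \<le> real (card (Z \<inter> {p..q}))"
proof -
  define K where "K = nat \<lfloor>(q - p) / (3 * S)\<rfloor>"
  have K: "3 * S * real K \<le> q - p" "(q - p) / (3 * S) - 1 \<le> real K"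
  proof -
    have "0 \<le> (q - p) / (3 * S)" using pq S by simp
    then have "real K = of_int \<lfloor>(q - p) / (3 * S)\<rfloor>" unfolding K_def by simp
    moreover have "of_int \<lfloor>(q - p) / (3 * S)\<rfloor> \<le> (q - p) / (3 * S)" by (rule of_int_floor_le)
    ultimately have "real K \<le> (q - p) / (3 * S)" by simp
    from mult_left_mono[OF this, of "3 * S"] show "3 * S * real K \<le> q - p" using S by simp
    show "(q - p) / (3 * S) - 1 \<le> real K" using \<open>real K = _\<close> by linarith
  qed
  \<comment> \<open>one point of \<open>Z\<close> in each of the disjoint windows \<open>[p + 3 S k, p + 3 S k + 2 S]\<close>\<close>
  obtain g where g: "\<And>k. g k \<in> Z \<and> \<bar>g k - (p + S + 3 * S * real k)\<bar> \<le> S"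
    using choice[of "\<lambda>k z. z \<in> Z \<and> \<bar>z - (p + S + 3 * S * real k)\<bar> \<le> S"] cov
    unfolding covering_def by blast
  have g_bounds: "p + 3 * S * real k \<le> g k" "g k \<le> p + 3 * S * real k + 2 * S" for k
    using g[of k] by (auto simp: abs_le_iff)
  have "inj_on g {..<K}"
  proof (rule linorder_inj_onI')
    fix i j :: nat assume "i < j"
    then have "3 * S * (real i + 1) \<le> 3 * S * real j"
      using S by simp
    then show "g i \<noteq> g j" using g_bounds[of i] g_bounds[of j] S by (simp add: algebra_simps)
  qed
  moreover have "g ` {..<K} \<subseteq> Z \<inter> {p..q}"
  proof (rule image_subsetI)
    fix k assume "k \<in> {..<K}"
    then have "3 * S * real k + 3 * S \<le> 3 * S * real K"
      using S mult_left_mono[of "real k + 1" "real K" "3 * S"] by (simp add: distrib_left)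
    moreover have "0 \<le> 3 * S * real k" using S by simp
    ultimately have "p \<le> g k" "g k \<le> q"
      using g_bounds[of k] K(1) S by linarith+
    then show "g k \<in> Z \<inter> {p..q}" using g[of k] by simp
  qed
  ultimately have "K \<le> card (Z \<inter> {p..q})"
    using fin card_inj_on_le by fastforce
  then show ?thesis using K(2) by linarith
qed

lemma fmeasurable_Int_Icc: "A \<in> sets borel \<Longrightarrow> A \<inter> {p..q :: real} \<in> fmeasurable lborel"
  using fmeasurable_Int_fmeasurable[of "{p..q}" lborel A]
  by (simp add: Int_commute fmeasurable_def emeasure_lborel_Icc_eq)

lemma fmeasurable_cball: "cball (z::real) \<rho> \<in> fmeasurable lborel"
  by (simp add: fmeasurable_def cball_eq_atLeastAtMost emeasure_lborel_Icc_eq)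

lemma fmeasurable_UN_cball: "finite A \<Longrightarrow> (\<Union>z\<in>A. cball (z::real) \<rho>) \<in> fmeasurable lborel"
  by (intro fmeasurable.finite_UN fmeasurable_cball)

lemma measure_UN_cball_le:
  assumes "finite A" "0 \<le> \<rho>"
  shows "measure lborel (\<Union>z\<in>A. cball (z::real) \<rho>) \<le> real (card A) * (2 * \<rho>)"
proof -
  have "measure lborel (\<Union>z\<in>A. cball z \<rho>) \<le> (\<Sum>z\<in>A. measure lborel (cball z \<rho>))"
    by (rule measure_UNION_le) (use assms in auto)
  also have "\<dots> = real (card A) * (2 * \<rho>)"
    using assms by (simp add: cball_eq_atLeastAtMost)
  finally show ?thesis .
qed

definition nbhd :: "real set \<Rightarrow> real \<Rightarrow> real set" where
  "nbhd Z \<rho> = (\<Union>z\<in>Z. cball z \<rho>)"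

lemma nbhd_borel: "countable Z \<Longrightarrow> nbhd Z \<rho> \<in> sets borel"
  unfolding nbhd_def by (intro sets.countable_UN'') auto

lemma fmeasurable_nbhd_Int_Icc:
  "separated s Z \<Longrightarrow> s > 0 \<Longrightarrow> nbhd Z \<rho> \<inter> {p..q} \<in> fmeasurable lborel"
  by (intro fmeasurable_Int_Icc nbhd_borel countable_separated)

lemma nbhd_Int_Icc_subset: "nbhd Z \<rho> \<inter> {p..q} \<subseteq> (\<Union>z \<in> Z \<inter> {p - \<rho>..q + \<rho>}. cball z \<rho>)"
  unfolding nbhd_def by (auto simp: dist_real_def abs_le_iff)

lemma measure_nbhd_Int_Icc_le:
  assumes sep: "separated s Z" and s: "s > 0" and pq: "p \<le> q" and \<rho>: "0 \<le> \<rho>"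
  shows "measure lborel (nbhd Z \<rho> \<inter> {p..q}) \<le> ((q - p + 2 * \<rho>) / s + 1) * (2 * \<rho>)"
proof -
  let ?A = "Z \<inter> {p - \<rho>..q + \<rho>}"
  have fin: "finite ?A" by (rule finite_separated_Int_Icc[OF sep s])
  have "measure lborel (nbhd Z \<rho> \<inter> {p..q}) \<le> measure lborel (\<Union>z\<in>?A. cball z \<rho>)"
    using fmeasurableD[OF fmeasurable_nbhd_Int_Icc[OF sep s]]
    by (intro measure_mono_fmeasurable nbhd_Int_Icc_subset fmeasurable_UN_cball[OF fin])
  also have "\<dots> \<le> real (card ?A) * (2 * \<rho>)" by (rule measure_UN_cball_le[OF fin \<rho>])
  also have "\<dots> \<le> ((q - p + 2 * \<rho>) / s + 1) * (2 * \<rho>)"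
    using card_separated_Int_Icc_le(2)[OF sep s, of "p - \<rho>" "q + \<rho>"] pq \<rho>
    by (intro mult_right_mono) (auto simp: algebra_simps)
  finally show ?thesis .
qed

lemma measure_nbhd_Int_Icc_ge:
  assumes sep: "separated s Z" and s: "s > 0" and cov: "covering S Z" and S: "S > 0"
    and \<rho>: "0 \<le> \<rho>" "2 * \<rho> < s" and pq: "p + 2 * \<rho> \<le> q"
  shows "((q - p - 2 * \<rho>) / (3 * S) - 1) * (2 * \<rho>) \<le> measure lborel (nbhd Z \<rho> \<inter> {p..q})"
proof -
  let ?A = "Z \<inter> {p + \<rho>..q - \<rho>}"
  have fin: "finite ?A" by (rule finite_separated_Int_Icc[OF sep s])
  have "disjoint_family_on (\<lambda>z. cball z \<rho>) ?A"
    unfolding disjoint_family_on_def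
    using separatedD[OF sep] \<rho> by (force simp: dist_real_def abs_le_iff)
  then have "measure lborel (\<Union>z\<in>?A. cball z \<rho>) = (\<Sum>z\<in>?A. measure lborel (cball z \<rho>))"
    using fin by (intro measure_finite_Union) (auto simp: fmeasurableD2[OF fmeasurable_cball])
  also have "\<dots> = real (card ?A) * (2 * \<rho>)"
    using \<rho> by (simp add: cball_eq_atLeastAtMost)
  finally have "measure lborel (\<Union>z\<in>?A. cball z \<rho>) = real (card ?A) * (2 * \<rho>)" .
  moreover have "(q - p - 2 * \<rho>) / (3 * S) - 1 \<le> real (card ?A)"
    using card_covering_Int_Icc_ge[OF fin cov S] pq by (simp add: algebra_simps)
  moreover have "measure lborel (\<Union>z\<in>?A. cball z \<rho>) \<le> measure lborel (nbhd Z \<rho> \<inter> {p..q})"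
    using fmeasurable_nbhd_Int_Icc[OF sep s] fmeasurableD[OF fmeasurable_UN_cball[OF fin]]
    by (intro measure_mono_fmeasurable) (auto simp: nbhd_def dist_real_def abs_le_iff)
  ultimately show ?thesis
    using \<rho> by (smt (verit) mult_right_mono)
qed

lemma measure_nbhd_Int_nbhd_Int_Icc_le:
  assumes sep1: "separated s1 Z1" and s1: "s1 > 0" and sep2: "separated s2 Z2" and s2: "s2 > 0"
    and pq: "p \<le> q" and \<rho>1: "0 \<le> \<rho>1" and \<rho>2: "0 \<le> \<rho>2"
  shows "measure lborel (nbhd Z1 \<rho>1 \<inter> nbhd Z2 \<rho>2 \<inter> {p..q})
     \<le> ((q - p + 2 * \<rho>1) / s1 + 1) * (((2 * \<rho>1 + 2 * \<rho>2) / s2 + 1) * (2 * \<rho>2))"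
proof -
  let ?A = "Z1 \<inter> {p - \<rho>1..q + \<rho>1}"
  let ?B = "\<lambda>z. Z2 \<inter> {z - \<rho>1 - \<rho>2..z + \<rho>1 + \<rho>2}"
  let ?c = "((2 * \<rho>1 + 2 * \<rho>2) / s2 + 1) * (2 * \<rho>2)"
  have finA: "finite ?A" and finB: "\<And>z. finite (?B z)"
    using finite_separated_Int_Icc[OF sep1 s1] finite_separated_Int_Icc[OF sep2 s2] by auto
  have "nbhd Z1 \<rho>1 \<inter> nbhd Z2 \<rho>2 \<inter> {p..q} \<subseteq> (\<Union>z\<in>?A. \<Union>w\<in>?B z. cball w \<rho>2)"
    unfolding nbhd_def by (force simp: dist_real_def abs_le_iff)
  then have "measure lborel (nbhd Z1 \<rho>1 \<inter> nbhd Z2 \<rho>2 \<inter> {p..q})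
      \<le> measure lborel (\<Union>z\<in>?A. \<Union>w\<in>?B z. cball w \<rho>2)"
    using nbhd_borel[OF countable_separated[OF sep1 s1]] nbhd_borel[OF countable_separated[OF sep2 s2]]
    by (intro measure_mono_fmeasurable fmeasurable.finite_UN finA fmeasurable_UN_cball finB) auto
  also have "\<dots> \<le> (\<Sum>z\<in>?A. measure lborel (\<Union>w\<in>?B z. cball w \<rho>2))"
    using fmeasurableD[OF fmeasurable_UN_cball[OF finB]] by (intro measure_UNION_le finA) auto
  also have "\<dots> \<le> (\<Sum>z\<in>?A. ?c)"
  proof (rule sum_mono)
    fix z
    show "measure lborel (\<Union>w\<in>?B z. cball w \<rho>2) \<le> ?c"
      using measure_UN_cball_le[OF finB \<rho>2, of z]
        card_separated_Int_Icc_le(2)[OF sep2 s2, of "z - \<rho>1 - \<rho>2" "z + \<rho>1 + \<rho>2"] \<rho>1 \<rho>2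
      by (smt (verit) mult_right_mono)
  qed
  also have "\<dots> = real (card ?A) * ?c" by simp
  also have "\<dots> \<le> ((q - p + 2 * \<rho>1) / s1 + 1) * ?c"
    using card_separated_Int_Icc_le(2)[OF sep1 s1, of "p - \<rho>1" "q + \<rho>1"] pq \<rho>1 \<rho>2 s2
    by (intro mult_right_mono) (auto simp: algebra_simps)
  finally show ?thesis .
qed

lemma Chung_Erdos_inequality:
  assumes J: "finite J" and A: "\<And>n. n \<in> J \<Longrightarrow> A n \<in> fmeasurable M"
  shows "(\<Sum>n\<in>J. measure M (A n))\<^sup>2
    \<le> measure M (\<Union>n\<in>J. A n) * (\<Sum>m\<in>J. \<Sum>n\<in>J. measure M (A m \<inter> A n))"
proof -
  define U where "U = (\<Union>n\<in>J. A n)"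
  define F where "F = (\<Sum>n\<in>J. measure M (A n))"
  define G where "G = (\<Sum>m\<in>J. \<Sum>n\<in>J. measure M (A m \<inter> A n))"
  define f where "f x = (\<Sum>n\<in>J. indicator (A n) x :: real)" for x
  have U: "U \<in> fmeasurable M"
    unfolding U_def using J A by (intro fmeasurable.finite_UN) auto
  have AA: "A m \<inter> A n \<in> fmeasurable M" if "m \<in> J" "n \<in> J" for m n
    using A[OF that(1)] A[OF that(2)] by (rule fmeasurable.Int)
  have int_f: "integrable M f" and f: "integral\<^sup>L M f = F"
    unfolding f_def F_def using A by (auto simp: fmeasurable_def)
  have f2: "(f x)\<^sup>2 = (\<Sum>m\<in>J. \<Sum>n\<in>J. indicator (A m \<inter> A n) x)" for x
    unfolding f_def power2_eq_square sum_product by (simp add: indicator_inter_arith)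
  have int_f2: "integrable M (\<lambda>x. (f x)\<^sup>2)" and G: "integral\<^sup>L M (\<lambda>x. (f x)\<^sup>2) = G"
    unfolding f2 G_def using AA by (auto simp: fmeasurable_def)
  have quadratic: "0 \<le> G - 2 * c * F + c\<^sup>2 * measure M U" for c
  proof -
    have "f x = 0" if "x \<notin> U" for x
      using that by (auto simp: f_def U_def intro!: sum.neutral)
    then have "(f x - c * indicator U x)\<^sup>2 = (f x)\<^sup>2 - 2 * c * f x + c\<^sup>2 * indicator U x" for x
      by (cases "x \<in> U") (simp_all add: power2_eq_square algebra_simps)
    moreover have "0 \<le> integral\<^sup>L M (\<lambda>x. (f x - c * indicator U x)\<^sup>2)"
      by simp
    ultimately show ?thesis
      using int_f int_f2 U f G by (simp add: fmeasurable_def)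
  qed
  have "F = 0" if "measure M U = 0"
  proof -
    have "measure M (A n) \<le> measure M U" if "n \<in> J" for n
      using that fmeasurableD[OF A[OF that]] U by (intro measure_mono_fmeasurable) (auto simp: U_def)
    then have "measure M (A n) = 0" if "n \<in> J" for n
      using that \<open>measure M U = 0\<close> by (simp add: antisym)
    then show "F = 0" unfolding F_def by simp
  qed
  moreover have "F\<^sup>2 \<le> measure M U * G" if "measure M U \<noteq> 0"
  proof -
    have "0 < measure M U" using that measure_nonneg[of M U] by linarith
    with quadratic[of "F / measure M U"] show ?thesis
      by (simp add: field_simps power2_eq_square)
  qed
  ultimately have "F\<^sup>2 \<le> measure M U * G" by fastforce
  then show ?thesis unfolding U_def F_def G_def .
qed

text \<open>By Vitali, \<open>G\<close> is up to a null set a disjoint union of balls inside \<open>G\<close>, and \<open>W\<close> fills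
  each of them in proportion \<open>\<eta>\<close>.\<close>

lemma measure_Int_open_ge_of_density:
  fixes W G :: "'a::euclidean_space set"
  assumes W: "W \<in> sets lebesgue" and G: "open G" "bounded G" and \<eta>: "\<eta> > 0"
    and dens: "\<And>x d. 0 < d \<Longrightarrow> ball x d \<subseteq> G
      \<Longrightarrow> \<eta> * measure lebesgue (ball x d) \<le> measure lebesgue (W \<inter> ball x d)"
  shows "\<eta> * measure lebesgue G \<le> measure lebesgue (W \<inter> G)"
proof -
  let ?B = "\<lambda>i. ball (fst i) (snd i)"
  have G_meas: "G \<in> lmeasurable" using G by (rule lmeasurable_open[rotated])
  have WG_meas: "W \<inter> G \<in> lmeasurable"
    using fmeasurable_Int_fmeasurable[OF G_meas W] by (simp add: Int_commute)
  obtain C where C: "countable C" "C \<subseteq> {(x, d). 0 < d \<and> ball x d \<subseteq> G}"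
    "pairwise (\<lambda>i j. disjnt (?B i) (?B j)) C" "negligible (G - (\<Union>i\<in>C. ?B i))"
  proof (rule Vitali_covering_theorem_balls[of G _ fst snd])
    fix x and d :: real assume "x \<in> G" "0 < d"
    then obtain e where "e > 0" "ball x e \<subseteq> G" using G(1) by (meson openE)
    then show "\<exists>i. i \<in> {(x, d). 0 < d \<and> ball x d \<subseteq> G} \<and> x \<in> ?B i \<and> snd i < d"
      using \<open>0 < d\<close> by (intro exI[of _ "(x, min e (d / 2))"]) auto
  qed blast
  have bound: "measure lebesgue (\<Union>i\<in>I. ?B i) \<le> measure lebesgue (W \<inter> G) / \<eta>"
    if I: "I \<subseteq> C" "finite I" for I
  proof -
    have disj: "pairwise (\<lambda>i j. disjnt (?B i) (?B j)) I" using C(3) I(1) by (rule pairwise_subset)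
    then have disjW: "pairwise (\<lambda>i j. disjnt (W \<inter> ?B i) (W \<inter> ?B j)) I"
      unfolding pairwise_def disjnt_def by blast
    have W_ball: "W \<inter> ?B i \<in> lmeasurable" for i
      using fmeasurable_Int_fmeasurable[OF lmeasurable_ball W] by (simp add: Int_commute)
    have "measure lebesgue (\<Union>i\<in>I. ?B i) = (\<Sum>i\<in>I. measure lebesgue (?B i))"
      by (rule measure_UNION'[OF I(2) _ disj]) simp
    also have "\<dots> \<le> (\<Sum>i\<in>I. measure lebesgue (W \<inter> ?B i) / \<eta>)"
      using C(2) I(1) \<eta> dens by (intro sum_mono) (auto simp: pos_le_divide_eq mult.commute)
    also have "\<dots> = measure lebesgue (\<Union>i\<in>I. W \<inter> ?B i) / \<eta>"
      by (subst measure_UNION'[OF I(2) W_ball disjW]) (simp add: sum_divide_distrib)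
    also have "\<dots> \<le> measure lebesgue (W \<inter> G) / \<eta>"
    proof (intro divide_right_mono measure_mono_fmeasurable)
      show "(\<Union>i\<in>I. W \<inter> ?B i) \<subseteq> W \<inter> G" using C(2) I(1) by force
      show "(\<Union>i\<in>I. W \<inter> ?B i) \<in> sets lebesgue"
        using fmeasurableD[OF fmeasurable.finite_UN[OF I(2) W_ball]] .
    qed (use WG_meas \<eta> in auto)
    finally show ?thesis .
  qed
  have "measure lebesgue G \<le> measure lebesgue ((G - (\<Union>i\<in>C. ?B i)) \<union> (\<Union>i\<in>C. ?B i))"
    using G_meas negligible_imp_measurable[OF C(4)] fmeasurable_UN_bound[OF C(1) _ bound]
    by (intro measure_mono_fmeasurable) (auto intro: fmeasurableD)
  also have "\<dots> \<le> measure lebesgue (G - (\<Union>i\<in>C. ?B i)) + measure lebesgue (\<Union>i\<in>C. ?B i)"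
    using negligible_imp_measurable[OF C(4)] fmeasurable_UN_bound[OF C(1) _ bound]
    by (intro measure_Un_le) (auto intro: fmeasurableD)
  also have "\<dots> \<le> measure lebesgue (W \<inter> G) / \<eta>"
    using negligible_imp_measure0[OF C(4)] measure_UN_bound[OF C(1) _ bound] by simp
  finally show ?thesis using \<eta> by (simp add: pos_le_divide_eq mult.commute)
qed

text \<open>If \<open>G\<close> is open and approximates \<open>S = ball 0 k - W\<close> from outside, then \<open>W \<inter> G \<subseteq> G - S\<close>,
  so the density bound makes the measure of \<open>G\<close>, and hence the outer measure of \<open>S\<close>, small.\<close>

lemma AE_in_of_uniform_density:
  fixes W :: "'a::euclidean_space set"
  assumes W: "W \<in> sets lebesgue" and \<eta>: "\<eta> > 0"
    and dens: "\<And>x d. 0 < d \<Longrightarrow> \<eta> * measure lebesgue (ball x d) \<le> measure lebesgue (W \<inter> ball x d)"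
  shows "AE x in lebesgue. x \<in> W"
proof -
  have "negligible (ball 0 (real k) - W)" for k :: nat
    unfolding negligible_outer_le
  proof (intro allI impI)
    fix e :: real assume "e > 0"
    let ?S = "ball 0 (real k) - W"
    obtain T where T: "open T" "?S \<subseteq> T" "T - ?S \<in> lmeasurable" "emeasure lebesgue (T - ?S) < ennreal (\<eta> * e)"
    proof (rule sets_lebesgue_outer_open)
      show "?S \<in> sets lebesgue" using W by auto
      show "0 < \<eta> * e" using \<eta> \<open>e > 0\<close> by simp
    qed
    define G where "G = T \<inter> ball 0 (real k)"
    have G: "open G" "bounded G" "?S \<subseteq> G" "G \<in> lmeasurable"
      unfolding G_def using T by (auto intro: lmeasurable_open)
    have "\<eta> * measure lebesgue G \<le> measure lebesgue (W \<inter> G)"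
      by (rule measure_Int_open_ge_of_density[OF W G(1,2) \<eta>]) (use dens in blast)
    also have "\<dots> \<le> measure lebesgue (T - ?S)"
    proof (rule measure_mono_fmeasurable)
      show "W \<inter> G \<subseteq> T - ?S" unfolding G_def by auto
      show "W \<inter> G \<in> sets lebesgue" using W fmeasurableD[OF G(4)] by (rule sets.Int)
    qed (rule T(3))
    also have "\<dots> \<le> \<eta> * e"
    proof -
      have "ennreal (measure lebesgue (T - ?S)) < ennreal (\<eta> * e)"
        using T(4) unfolding emeasure_eq_ennreal_measure[OF fmeasurableD2[OF T(3)]] .
      then show ?thesis by (simp add: ennreal_less_iff)
    qed
    finally have "measure lebesgue G \<le> e" using \<eta> by simp
    then show "\<exists>T. ?S \<subseteq> T \<and> T \<in> lmeasurable \<and> measure lebesgue T \<le> e"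
      using G by blast
  qed
  then have "negligible (\<Union>k::nat. ball 0 (real k) - W)"
    by (rule negligible_Union_nat)
  moreover have "(\<Union>k::nat. ball 0 (real k) - W) = - W"
    by (auto simp: dist_norm intro: reals_Archimedean2)
  ultimately have "- W \<in> null_sets lebesgue"
    by (simp add: negligible_iff_null_sets)
  from AE_not_in[OF this] show ?thesis by simp
qed

lemma AE_in_of_uniform_density_Icc:
  fixes W :: "real set"
  assumes W: "W \<in> sets borel" and \<eta>: "\<eta> > 0"
    and dens: "\<And>u v. u < v \<Longrightarrow> \<eta> * (v - u) \<le> measure lborel (W \<inter> {u..v})"
  shows "AE x in lborel. x \<in> W"
proof -
  have "\<eta> / 2 * measure lebesgue (ball x d) \<le> measure lebesgue (W \<inter> ball x d)" if "0 < d" for x d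
  proof -
    have "\<eta> / 2 * measure lebesgue (ball x d) = \<eta> * ((x + d / 2) - (x - d / 2))"
      using that by (simp add: ball_eq_greaterThanLessThan)
    also have "\<dots> \<le> measure lborel (W \<inter> {x - d / 2..x + d / 2})"
      using that by (intro dens) simp
    also have "\<dots> \<le> measure lborel (W \<inter> ball x d)"
      using W that fmeasurable_Int_fmeasurable[of "ball x d" lborel W]
      by (intro measure_mono_fmeasurable)
        (auto simp: dist_real_def Int_commute fmeasurable_def ball_eq_greaterThanLessThan emeasure_lborel_Ioo)
    finally show ?thesis using W by simp
  qed
  then have "AE x in lebesgue. x \<in> W"
    using W \<eta> by (intro AE_in_of_uniform_density[of W "\<eta> / 2"]) auto
  then show ?thesis by (simp add: AE_completion_iff)
qed

lemma sum_lessThan_power_le: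
  fixes a :: real assumes "a > 1"
  shows "(\<Sum>m<n. a ^ m) \<le> a ^ n / (a - 1)"
  using assms by (simp add: sum_gp_strict field_simps)

lemma sum_lessThan_inverse_power_le:
  fixes a :: real assumes "a > 1"
  shows "(\<Sum>m<n. 1 / a ^ m) \<le> a / (a - 1)"
proof -
  have "(\<Sum>m<n. 1 / a ^ m) = (\<Sum>m<n. (1 / a) ^ m)" by (simp add: power_one_over)
  also have "\<dots> = (1 - (1 / a) ^ n) / (1 - 1 / a)" using assms by (simp add: sum_gp_strict)
  also have "\<dots> \<le> 1 / (1 - 1 / a)" using assms by (intro divide_right_mono) auto
  also have "\<dots> = a / (a - 1)" using assms by (simp add: field_simps)
  finally show ?thesis .
qed

lemma not_summable_imp_sum_atLeastAtMost_unbounded: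
  fixes f :: "nat \<Rightarrow> real"
  assumes f: "\<And>n. 0 \<le> f n" and "\<not> summable f"
  shows "\<exists>N. X \<le> (\<Sum>n=K..N. f n)"
proof (rule ccontr)
  assume "\<nexists>N. X \<le> (\<Sum>n=K..N. f n)"
  then have "(\<Sum>i<n. f i) \<le> (\<Sum>i<K. f i) + X" for n
  proof -
    have "(\<Sum>i<n. f i) \<le> (\<Sum>i\<in>{..<K} \<union> {K..n}. f i)"
      using f by (intro sum_mono2) auto
    also have "\<dots> \<le> (\<Sum>i<K. f i) + (\<Sum>i=K..n. f i)"
      using f by (simp add: sum_Un sum_nonneg)
    finally show ?thesis using \<open>\<nexists>N. _\<close> by (meson add_left_mono not_le order.trans order_less_imp_le)
  qed
  then have "summable f" by (intro summableI_nonneg_bounded[OF f])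
  with \<open>\<not> summable f\<close> show False ..
qed

lemma not_summable_min:
  fixes f :: "nat \<Rightarrow> real"
  assumes "\<not> summable f" "c > 0"
  shows "\<not> summable (\<lambda>n. min (f n) c)"
proof
  assume summable: "summable (\<lambda>n. min (f n) c)"
  then have "(\<lambda>n. min (f n) c) \<longlonglongrightarrow> 0" by (rule summable_LIMSEQ_zero)
  then have "eventually (\<lambda>n. min (f n) c < c) sequentially" using \<open>c > 0\<close> by (rule order_tendstoD)
  then have "eventually (\<lambda>n. min (f n) c = f n) sequentially"
    by (rule eventually_mono) (auto simp: min_def split: if_splits)
  with summable have "summable f" by (simp add: summable_cong)
  with assms(1) show False ..
qed

definition approx_set :: "real set \<Rightarrow> real \<Rightarrow> real \<Rightarrow> real set" where
  "approx_set Y c \<rho> = {x. \<exists>y\<in>Y. \<bar>c * x - y\<bar> \<le> \<rho>}"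

lemma abs_scaled_diff:
  fixes c x y :: real
  assumes "c \<noteq> 0"
  shows "\<bar>y / c - x\<bar> = \<bar>c * x - y\<bar> / \<bar>c\<bar>"
proof -
  from assms have "y / c - x = - (c * x - y) / c" by (simp add: field_simps)
  then show ?thesis by (simp add: abs_divide abs_minus_commute)
qed

lemma approx_set_eq_nbhd:
  "c \<noteq> 0 \<Longrightarrow> approx_set Y c \<rho> = nbhd ((\<lambda>y. y / c) ` Y) (\<rho> / \<bar>c\<bar>)"
  by (auto simp: approx_set_def nbhd_def dist_real_def abs_scaled_diff divide_le_cancel)

lemma separated_divide_image:
  assumes "separated s Y" "c \<noteq> 0"
  shows "separated (s / \<bar>c\<bar>) ((\<lambda>y. y / c) ` Y)"
  unfolding separated_def
proof safe
  fix y y' assume "y \<in> Y" "y' \<in> Y" "y / c \<noteq> y' / c"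
  then have "s \<le> \<bar>y - y'\<bar>" using separatedD[OF assms(1)] by auto
  then show "s / \<bar>c\<bar> \<le> \<bar>y / c - y' / c\<bar>"
    using assms(2) by (simp add: diff_divide_distrib[symmetric] abs_divide divide_right_mono)
qed

lemma covering_divide_image:
  assumes "covering S Y" "c \<noteq> 0"
  shows "covering (S / \<bar>c\<bar>) ((\<lambda>y. y / c) ` Y)"
  unfolding covering_def
proof
  fix x
  obtain y where "y \<in> Y" "\<bar>y - c * x\<bar> \<le> S" using assms(1) unfolding covering_def by blast
  moreover have "\<bar>y / c - x\<bar> \<le> S / \<bar>c\<bar>"
    unfolding abs_scaled_diff[OF assms(2)]
    using \<open>\<bar>y - c * x\<bar> \<le> S\<close> by (simp add: abs_minus_commute divide_right_mono)
  ultimately show "\<exists>z\<in>(\<lambda>y. y / c) ` Y. \<bar>z - x\<bar> \<le> S / \<bar>c\<bar>" by blast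
qed

locale delone_bounds =
  fixes Y :: "real set" and r R :: real
  assumes r_pos: "r > 0" and R_pos: "R > 0"
    and separated: "separated (2 * r) Y" and covering: "covering R Y"
begin

lemma separated_Y_divide: "c \<noteq> 0 \<Longrightarrow> separated (2 * r / \<bar>c\<bar>) ((\<lambda>y. y / c) ` Y)"
  and separation_divide_pos: "c \<noteq> 0 \<Longrightarrow> 0 < 2 * r / \<bar>c\<bar>"
  using separated_divide_image[OF separated] r_pos by auto

lemma approx_set_borel: "approx_set Y c \<rho> \<in> sets borel"
proof (cases "c = 0")
  case False
  then show ?thesis
    unfolding approx_set_eq_nbhd[OF False]
    by (intro nbhd_borel countable_separated[OF separated_Y_divide separation_divide_pos])
qed (simp add: approx_set_def)

lemma measure_approx_set_Icc_le:
  assumes c: "1 \<le> \<bar>c\<bar>" and \<rho>: "0 \<le> \<rho>" and uv: "u \<le> v"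
  shows "measure lborel (approx_set Y c \<rho> \<inter> {u..v}) \<le> \<rho> * ((v - u) / r + 2 * \<rho> / r + 2)"
proof -
  define b where "b = \<bar>c\<bar>"
  have b: "b \<ge> 1" "c \<noteq> 0" using c by (auto simp: b_def)
  have "measure lborel (approx_set Y c \<rho> \<inter> {u..v})
      \<le> ((v - u + 2 * (\<rho> / b)) / (2 * r / b) + 1) * (2 * (\<rho> / b))"
    unfolding approx_set_eq_nbhd[OF b(2)] b_def
    using \<rho> uv b by (intro measure_nbhd_Int_Icc_le separated_Y_divide separation_divide_pos) auto
  also have "\<dots> = \<rho> * (v - u) / r + (2 * \<rho> / r + 2) * \<rho> / b"
    using b r_pos by (simp add: field_simps)
  also have "\<dots> \<le> \<rho> * (v - u) / r + (2 * \<rho> / r + 2) * \<rho>"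
    using b r_pos \<rho> mult_left_mono[OF b(1), of "(2 * \<rho> / r + 2) * \<rho>"]
    by (simp add: divide_le_eq)
  finally show ?thesis by (simp add: algebra_simps)
qed

lemma measure_approx_set_Icc_ge:
  assumes \<rho>: "0 \<le> \<rho>" "\<rho> \<le> r / 2" and large: "2 * r + 6 * R \<le> \<bar>c\<bar> * (v - u)"
  shows "\<rho> * (v - u) / (3 * R) \<le> measure lborel (approx_set Y c \<rho> \<inter> {u..v})"
proof -
  define b where "b = \<bar>c\<bar>"
  have c: "c \<noteq> 0" using large r_pos R_pos by auto
  then have b: "b > 0" by (simp add: b_def)
  have "2 * \<rho> \<le> b * (v - u)" using large \<rho> R_pos unfolding b_def by linarith
  then have uv: "u + 2 * (\<rho> / b) \<le> v" using b by (simp add: field_simps)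
  have "\<rho> * (b * (v - u)) \<le> \<rho> * (2 * (b * (v - u) - 2 * \<rho> - 3 * R))"
    using large \<rho> unfolding b_def by (intro mult_left_mono) auto
  then have "\<rho> * (b * (v - u)) / (3 * R * b) \<le> \<rho> * (2 * (b * (v - u) - 2 * \<rho> - 3 * R)) / (3 * R * b)"
    using b R_pos by (intro divide_right_mono) auto
  moreover have "\<rho> * (b * (v - u)) / (3 * R * b) = \<rho> * (v - u) / (3 * R)"
    using b by simp
  moreover have "\<rho> * (2 * (b * (v - u) - 2 * \<rho> - 3 * R)) / (3 * R * b)
      = ((v - u - 2 * (\<rho> / b)) / (3 * (R / b)) - 1) * (2 * (\<rho> / b))"
    using b R_pos by (simp add: field_simps)
  ultimately have "\<rho> * (v - u) / (3 * R) \<le> ((v - u - 2 * (\<rho> / b)) / (3 * (R / b)) - 1) * (2 * (\<rho> / b))"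
    by simp
  also have "\<dots> \<le> measure lborel (approx_set Y c \<rho> \<inter> {u..v})"
    unfolding approx_set_eq_nbhd[OF c] b_def[symmetric]
  proof (rule measure_nbhd_Int_Icc_ge)
    show "covering (R / b) ((\<lambda>y. y / c) ` Y)"
      unfolding b_def using covering_divide_image[OF covering c] .
    show "2 * (\<rho> / b) < 2 * r / b" using \<rho> r_pos b by (simp add: divide_strict_right_mono)
  qed (use separated_Y_divide[OF c] separation_divide_pos[OF c] R_pos b \<rho> uv in \<open>auto simp: b_def\<close>)
  finally show ?thesis .
qed

lemma measure_approx_set_Int_Icc_le:
  assumes c: "1 \<le> \<bar>c\<bar>" "\<bar>c\<bar> \<le> \<bar>c'\<bar>" and \<rho>: "0 \<le> \<rho>" "\<rho> \<le> r / 2"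
    and \<rho>': "0 \<le> \<rho>'" "\<rho>' \<le> r / 2" and uv: "u \<le> v"
  shows "measure lborel (approx_set Y c \<rho> \<inter> approx_set Y c' \<rho>' \<inter> {u..v})
    \<le> (v - u) / r\<^sup>2 * \<rho> * \<rho>' + \<rho>' * (2 * (v - u) / r + 8) * (\<bar>c\<bar> / \<bar>c'\<bar> + 1 / \<bar>c\<bar>)"
proof -
  define b b' L where "b = \<bar>c\<bar>" and "b' = \<bar>c'\<bar>" and "L = v - u"
  have b: "1 \<le> b" "b \<le> b'" "c \<noteq> 0" "c' \<noteq> 0" using c by (auto simp: b_def b'_def)
  have L: "0 \<le> L" using uv by (simp add: L_def)
  have "measure lborel (approx_set Y c \<rho> \<inter> approx_set Y c' \<rho>' \<inter> {u..v})
      \<le> ((L + 2 * (\<rho> / b)) / (2 * r / b) + 1)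
         * (((2 * (\<rho> / b) + 2 * (\<rho>' / b')) / (2 * r / b') + 1) * (2 * (\<rho>' / b')))"
    unfolding approx_set_eq_nbhd[OF b(3)] approx_set_eq_nbhd[OF b(4)] b_def b'_def L_def
    using separated_Y_divide separation_divide_pos b \<rho> \<rho>' uv
    by (intro measure_nbhd_Int_nbhd_Int_Icc_le) (auto simp: b_def b'_def)
  also have "\<dots> = (L * b / (2 * r) + \<rho> / r + 1) * ((\<rho> * b' / (r * b) + \<rho>' / r + 1) * (2 * (\<rho>' / b')))"
    using b r_pos by (simp add: field_simps)
  also have "\<dots> \<le> (L * b / (2 * r) + 2) * ((\<rho> * b' / (r * b) + 2) * (2 * (\<rho>' / b')))"
  proof (intro mult_mono mult_right_mono)
    show "L * b / (2 * r) + \<rho> / r + 1 \<le> L * b / (2 * r) + 2"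
      and "\<rho> * b' / (r * b) + \<rho>' / r + 1 \<le> \<rho> * b' / (r * b) + 2"
      using \<rho> \<rho>' r_pos by (simp_all add: divide_le_eq)
  qed (use b r_pos \<rho> \<rho>' L in auto)
  also have "\<dots> = L / r\<^sup>2 * \<rho> * \<rho>' + \<rho>' * (2 * L / r * (b / b') + (4 * \<rho> / r) / b + 8 / b')"
    using b r_pos by (simp add: field_simps power2_eq_square)
  also have "\<dots> \<le> L / r\<^sup>2 * \<rho> * \<rho>' + \<rho>' * (2 * L / r * (b / b') + 8 / b + 8 * (b / b'))"
  proof -
    have "(4 * \<rho> / r) / b \<le> 8 / b" using \<rho> r_pos b by (intro divide_right_mono) (auto simp: divide_le_eq)
    moreover have "8 / b' \<le> 8 * (b / b')" using b by (simp add: divide_le_eq)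
    ultimately show ?thesis using \<rho>' by (intro add_left_mono mult_left_mono) auto
  qed
  also have "\<dots> \<le> L / r\<^sup>2 * \<rho> * \<rho>' + \<rho>' * (2 * L / r + 8) * (b / b' + 1 / b)"
  proof -
    have "\<rho>' * (2 * L / r + 8) * (b / b' + 1 / b)
        = \<rho>' * (2 * L / r * (b / b') + 8 / b + 8 * (b / b')) + \<rho>' * (2 * L / (r * b))"
      using b r_pos by (simp add: field_simps)
    moreover have "0 \<le> \<rho>' * (2 * L / (r * b))" using \<rho>' L r_pos b by simp
    ultimately show ?thesis by simp
  qed
  finally show ?thesis unfolding L_def b_def b'_def .
qed

lemma finite_approx_pairs_of_finite_hits:
  assumes "finite {n. x \<in> approx_set Y (\<alpha> ^ n) (g n)}" and "\<And>n. n \<ge> 1 \<Longrightarrow> \<psi> n \<le> g n"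
  shows "finite (approx_pairs Y \<psi> \<alpha> x)"
proof (rule finite_subset)
  show "approx_pairs Y \<psi> \<alpha> x
      \<subseteq> (SIGMA n:{n. x \<in> approx_set Y (\<alpha> ^ n) (g n)}. Y \<inter> {\<alpha> ^ n * x - g n..\<alpha> ^ n * x + g n})"
  proof safe
    fix n y assume "(n, y) \<in> approx_pairs Y \<psi> \<alpha> x"
    then have "y \<in> Y" "\<bar>\<alpha> ^ n * x - y\<bar> \<le> g n"
      using assms(2)[of n] by (auto simp: approx_pairs_def)
    then show "x \<in> approx_set Y (\<alpha> ^ n) (g n)" "y \<in> Y" "y \<in> {\<alpha> ^ n * x - g n..\<alpha> ^ n * x + g n}"
      by (auto simp: approx_set_def abs_le_iff)
  qed
  show "finite (SIGMA n:{n. x \<in> approx_set Y (\<alpha> ^ n) (g n)}. Y \<inter> {\<alpha> ^ n * x - g n..\<alpha> ^ n * x + g n})"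
    using assms(1) r_pos by (intro finite_SigmaI finite_separated_Int_Icc[OF separated]) auto
qed

end

lemma delone_bounds_of_delone:
  assumes "delone Y"
  obtains r R where "delone_bounds Y r R"
proof -
  obtain r where "r > 0" "\<forall>y\<in>Y. \<forall>y'\<in>Y. y \<noteq> y' \<longrightarrow> 2 * r \<le> dist y y'"
    using assms unfolding delone_def uniformly_discrete_def by auto
  moreover obtain R where "R > 0" "\<forall>z. cball z R \<inter> Y \<noteq> {}"
    using assms unfolding delone_def relatively_dense_def by auto
  ultimately have "delone_bounds Y r R"
    unfolding delone_bounds_def separated_def covering_def
    by (auto simp: dist_real_def abs_minus_commute ex_in_conv[symmetric])
  then show ?thesis by (rule that)
qed

locale dilation_setting = delone_bounds +
  fixes \<alpha> :: real
  assumes expanding: "\<bar>\<alpha>\<bar> > 1"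
begin

lemma abs_power_ge_1: "1 \<le> \<bar>\<alpha> ^ n\<bar>"
  using expanding by (simp add: power_abs one_le_power)

lemma AE_finite_hits_of_summable:
  assumes \<psi>: "\<And>n. 0 \<le> \<psi> n" and summable: "summable \<psi>"
  shows "AE x in lborel. finite {n. x \<in> approx_set Y (\<alpha> ^ n) (\<psi> n)}"
proof -
  let ?E = "\<lambda>n. approx_set Y (\<alpha> ^ n) (\<psi> n)"
  have \<psi>_le: "\<psi> n \<le> suminf \<psi>" for n
    using sum_le_suminf[OF summable, of "{n}"] \<psi> by simp
  have "AE x in lborel. eventually (\<lambda>n. x \<in> space lborel - ?E n \<inter> {- real M..real M}) sequentially"
    for M :: nat
  proof (rule borel_cantelli_AE1)
    show "?E n \<inter> {- real M..real M} \<in> sets lborel"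
      and "emeasure lborel (?E n \<inter> {- real M..real M}) < \<infinity>" for n
      using fmeasurable_Int_Icc[OF approx_set_borel] by (auto simp: fmeasurable_def)
    have "measure lborel (?E n \<inter> {- real M..real M})
        \<le> \<psi> n * (2 * real M / r + 2 * suminf \<psi> / r + 2)" for n
    proof -
      have "measure lborel (?E n \<inter> {- real M..real M})
          \<le> \<psi> n * ((real M - - real M) / r + 2 * \<psi> n / r + 2)"
        by (rule measure_approx_set_Icc_le[OF abs_power_ge_1 \<psi>]) simp
      also have "\<dots> \<le> \<psi> n * (2 * real M / r + 2 * suminf \<psi> / r + 2)"
        using \<psi>_le[of n] \<psi>[of n] r_pos by (intro mult_left_mono) (auto simp: divide_right_mono)
      finally show ?thesis .
    qed
    then show "summable (\<lambda>n. measure lborel (?E n \<inter> {- real M..real M}))"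
      by (intro summable_comparison_test[OF _ summable_mult2[OF summable]]) auto
  qed
  then have "AE x in lborel. \<forall>M::nat. eventually (\<lambda>n. x \<notin> ?E n \<inter> {- real M..real M}) sequentially"
    by (simp add: AE_all_countable)
  then show ?thesis
  proof (rule eventually_mono)
    fix x assume H: "\<forall>M::nat. eventually (\<lambda>n. x \<notin> ?E n \<inter> {- real M..real M}) sequentially"
    obtain M :: nat where M: "\<bar>x\<bar> \<le> real M" using real_arch_simple by blast
    have "eventually (\<lambda>n. x \<notin> ?E n) sequentially"
      using H[rule_format, of M] by (rule eventually_mono) (use M in \<open>auto simp: abs_le_iff\<close>)
    then show "finite {n. x \<in> ?E n}"
      by (simp add: eventually_sequentially finite_nat_set_iff_bounded_le) (meson not_le order.strict_implies_order)
  qed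
qed

lemma AE_finite_approx_pairs:
  assumes \<psi>: "\<And>n. n \<ge> 1 \<Longrightarrow> 0 \<le> \<psi> n" and summable: "summable (\<lambda>n. \<psi> (Suc n))"
  shows "AE x in lborel. finite (approx_pairs Y \<psi> \<alpha> x)"
proof -
  define g where "g n = (if n = 0 then 0 else \<psi> n)" for n
  have "summable (\<lambda>n. g (Suc n))" using summable by (simp add: g_def)
  then have "summable g" by (simp only: summable_Suc_iff)
  moreover have "0 \<le> g n" for n using \<psi>[of n] by (simp add: g_def)
  ultimately have "AE x in lborel. finite {n. x \<in> approx_set Y (\<alpha> ^ n) (g n)}"
    by (intro AE_finite_hits_of_summable)
  then show ?thesis
    by (rule eventually_mono) (erule finite_approx_pairs_of_finite_hits, simp add: g_def)
qed

end

locale small_radii_setting = dilation_setting +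
  fixes \<phi> :: "nat \<Rightarrow> real"
  assumes \<phi>_nonneg: "\<And>n. 0 \<le> \<phi> n" and \<phi>_le: "\<And>n. \<phi> n \<le> r / 2"
begin

definition E :: "nat \<Rightarrow> real set" where
  "E n = approx_set Y (\<alpha> ^ n) (\<phi> n)"

lemma E_borel: "E n \<in> sets borel"
  unfolding E_def by (rule approx_set_borel)

text \<open>The error term in the quasi-independence of \<open>E m\<close> and \<open>E n\<close> for \<open>m < n\<close>:
  \<open>\<bar>\<alpha>\<bar> ^ m / \<bar>\<alpha>\<bar> ^ n\<close> is the ratio of the two scales, \<open>1 / \<bar>\<alpha>\<bar> ^ m\<close> a boundary effect at the
  coarser one.\<close>

definition overlap_error :: "real \<Rightarrow> nat \<Rightarrow> nat \<Rightarrow> real" where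
  "overlap_error L m n =
     (if m < n then (2 * L / r + 8) * \<phi> n * (\<bar>\<alpha>\<bar> ^ m / \<bar>\<alpha>\<bar> ^ n + 1 / \<bar>\<alpha>\<bar> ^ m) else 0)"

lemma overlap_error_nonneg: "0 \<le> L \<Longrightarrow> 0 \<le> overlap_error L m n"
  unfolding overlap_error_def using r_pos \<phi>_nonneg[of n] by simp

lemma measure_E_Int_E_Icc_le:
  assumes uv: "u \<le> v"
  shows "measure lborel (E m \<inter> E n \<inter> {u..v})
    \<le> (v - u) / r\<^sup>2 * \<phi> m * \<phi> n + overlap_error (v - u) m n + overlap_error (v - u) n m
      + (if m = n then (2 * (v - u) / r + 8) * \<phi> n else 0)"
proof -
  have L: "0 \<le> v - u" using uv by simp
  have pair: "measure lborel (E m \<inter> E n \<inter> {u..v}) \<le> (v - u) / r\<^sup>2 * \<phi> m * \<phi> n + overlap_error (v - u) m n"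
    if "m < n" for m n
  proof -
    have "\<bar>\<alpha> ^ m\<bar> \<le> \<bar>\<alpha> ^ n\<bar>"
      using that expanding by (simp add: power_abs power_increasing)
    then have "measure lborel (E m \<inter> E n \<inter> {u..v}) \<le> (v - u) / r\<^sup>2 * \<phi> m * \<phi> n
        + \<phi> n * (2 * (v - u) / r + 8) * (\<bar>\<alpha> ^ m\<bar> / \<bar>\<alpha> ^ n\<bar> + 1 / \<bar>\<alpha> ^ m\<bar>)"
      unfolding E_def
      by (intro measure_approx_set_Int_Icc_le abs_power_ge_1 \<phi>_nonneg \<phi>_le uv)
    then show ?thesis
      using that unfolding overlap_error_def by (simp add: power_abs mult_ac)
  qed
  consider "m < n" | "n < m" | "m = n" by linarith
  then show ?thesis
  proof cases
    case 1
    then show ?thesis using pair[OF 1] overlap_error_nonneg[OF L, of n m] by simp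
  next
    case 2
    have "E m \<inter> E n = E n \<inter> E m" by blast
    then show ?thesis using pair[OF 2] overlap_error_nonneg[OF L, of m n] 2 by (simp add: mult_ac)
  next
    case 3
    have "measure lborel (E n \<inter> {u..v}) \<le> \<phi> n * ((v - u) / r + 2 * \<phi> n / r + 2)"
      unfolding E_def by (rule measure_approx_set_Icc_le[OF abs_power_ge_1 \<phi>_nonneg uv])
    also have "\<dots> \<le> \<phi> n * (2 * (v - u) / r + 8)"
    proof (rule mult_left_mono)
      have "2 * \<phi> n / r \<le> 1" "0 \<le> (v - u) / r"
        using \<phi>_le[of n] r_pos L by (simp_all add: divide_le_eq)
      moreover have "2 * (v - u) / r = 2 * ((v - u) / r)" by simp
      ultimately show "(v - u) / r + 2 * \<phi> n / r + 2 \<le> 2 * (v - u) / r + 8" by linarith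
    qed (rule \<phi>_nonneg)
    finally have "measure lborel (E n \<inter> {u..v}) \<le> \<phi> n * (2 * (v - u) / r + 8)" .
    moreover have "0 \<le> (v - u) / r\<^sup>2 * \<phi> n * \<phi> n" using L \<phi>_nonneg[of n] by simp
    ultimately show ?thesis
      using 3 by (simp add: overlap_error_def mult.commute)
  qed
qed

lemma sum_overlap_error_le:
  assumes J: "finite J" and L: "0 \<le> L"
  shows "(\<Sum>m\<in>J. overlap_error L m n)
    \<le> (2 * L / r + 8) * ((\<bar>\<alpha>\<bar> + 1) / (\<bar>\<alpha>\<bar> - 1)) * \<phi> n"
proof -
  define a where "a = \<bar>\<alpha>\<bar>"
  have a: "a > 1" using expanding by (simp add: a_def)
  define K where "K = (2 * L / r + 8) * \<phi> n"
  have K: "0 \<le> K" using L r_pos \<phi>_nonneg[of n] by (simp add: K_def)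
  have "(\<Sum>m\<in>J. overlap_error L m n) = (\<Sum>m\<in>J \<inter> {..<n}. K * (a ^ m / a ^ n + 1 / a ^ m))"
    using J by (simp add: overlap_error_def sum.inter_restrict K_def a_def)
  also have "\<dots> \<le> (\<Sum>m<n. K * (a ^ m / a ^ n + 1 / a ^ m))"
    using K a by (intro sum_mono2) auto
  also have "\<dots> = K * ((\<Sum>m<n. a ^ m) / a ^ n + (\<Sum>m<n. 1 / a ^ m))"
    by (simp add: sum.distrib sum_distrib_left sum_divide_distrib distrib_left)
  also have "\<dots> \<le> K * (a ^ n / (a - 1) / a ^ n + a / (a - 1))"
    using a K sum_lessThan_power_le[OF a] sum_lessThan_inverse_power_le[OF a]
    by (intro mult_left_mono add_mono divide_right_mono) auto
  also have "\<dots> = K * ((a + 1) / (a - 1))"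
    using a by (simp add: add_divide_distrib)
  also have "\<dots> = (2 * L / r + 8) * ((a + 1) / (a - 1)) * \<phi> n"
    by (simp add: K_def)
  finally show ?thesis unfolding a_def .
qed

lemma sum_measure_E_Int_E_Icc_le:
  assumes J: "finite J" and uv: "u \<le> v"
  shows "(\<Sum>m\<in>J. \<Sum>n\<in>J. measure lborel (E m \<inter> E n \<inter> {u..v}))
    \<le> (v - u) / r\<^sup>2 * (\<Sum>n\<in>J. \<phi> n)\<^sup>2
      + (2 * (v - u) / r + 8) * (1 + 2 * ((\<bar>\<alpha>\<bar> + 1) / (\<bar>\<alpha>\<bar> - 1))) * (\<Sum>n\<in>J. \<phi> n)"
proof -
  define L where "L = v - u"
  define X where "X = (\<bar>\<alpha>\<bar> + 1) / (\<bar>\<alpha>\<bar> - 1)"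
  define C where "C = (2 * L / r + 8) * X"
  have L: "0 \<le> L" using uv by (simp add: L_def)
  have main: "(\<Sum>m\<in>J. \<Sum>n\<in>J. L / r\<^sup>2 * \<phi> m * \<phi> n) = L / r\<^sup>2 * (\<Sum>n\<in>J. \<phi> n)\<^sup>2"
    unfolding power2_eq_square[of "sum \<phi> J"] sum_product by (simp add: sum_distrib_left mult.assoc)
  have off1: "(\<Sum>m\<in>J. \<Sum>n\<in>J. overlap_error L m n) \<le> C * (\<Sum>n\<in>J. \<phi> n)"
    unfolding sum_distrib_left C_def
    using sum_overlap_error_le[OF J L] by (subst sum.swap) (intro sum_mono, simp add: X_def mult_ac)
  have off2: "(\<Sum>m\<in>J. \<Sum>n\<in>J. overlap_error L n m) \<le> C * (\<Sum>m\<in>J. \<phi> m)"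
    unfolding sum_distrib_left C_def
    using sum_overlap_error_le[OF J L] by (intro sum_mono) (simp add: X_def mult_ac)
  have diag: "(\<Sum>m\<in>J. \<Sum>n\<in>J. if m = n then (2 * L / r + 8) * \<phi> n else 0)
      = (2 * L / r + 8) * (\<Sum>n\<in>J. \<phi> n)"
    using J by (simp add: sum_distrib_left)
  have "(\<Sum>m\<in>J. \<Sum>n\<in>J. measure lborel (E m \<inter> E n \<inter> {u..v}))
      \<le> (\<Sum>m\<in>J. \<Sum>n\<in>J. L / r\<^sup>2 * \<phi> m * \<phi> n + overlap_error L m n + overlap_error L n m
            + (if m = n then (2 * L / r + 8) * \<phi> n else 0))"
    unfolding L_def by (intro sum_mono measure_E_Int_E_Icc_le uv)
  also have "\<dots> = (\<Sum>m\<in>J. \<Sum>n\<in>J. L / r\<^sup>2 * \<phi> m * \<phi> n) + (\<Sum>m\<in>J. \<Sum>n\<in>J. overlap_error L m n)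
      + (\<Sum>m\<in>J. \<Sum>n\<in>J. overlap_error L n m)
      + (\<Sum>m\<in>J. \<Sum>n\<in>J. if m = n then (2 * L / r + 8) * \<phi> n else 0)"
    by (simp only: sum.distrib)
  also have "\<dots> \<le> L / r\<^sup>2 * (\<Sum>n\<in>J. \<phi> n)\<^sup>2 + (2 * L / r + 8 + 2 * C) * (\<Sum>n\<in>J. \<phi> n)"
    using main off1 off2 diag by (simp add: algebra_simps)
  also have "\<dots> = L / r\<^sup>2 * (\<Sum>n\<in>J. \<phi> n)\<^sup>2 + (2 * L / r + 8) * (1 + 2 * X) * (\<Sum>n\<in>J. \<phi> n)"
    by (simp add: C_def algebra_simps add_divide_distrib)
  finally show ?thesis unfolding L_def X_def .
qed

lemma sum_measure_E_Icc_ge: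
  assumes large: "\<And>n. n \<in> J \<Longrightarrow> 2 * r + 6 * R \<le> \<bar>\<alpha> ^ n\<bar> * (v - u)"
  shows "(v - u) * (\<Sum>n\<in>J. \<phi> n) / (3 * R) \<le> (\<Sum>n\<in>J. measure lborel (E n \<inter> {u..v}))"
proof -
  have "(v - u) * (\<Sum>n\<in>J. \<phi> n) / (3 * R) = (\<Sum>n\<in>J. \<phi> n * (v - u) / (3 * R))"
    unfolding sum_divide_distrib[symmetric] sum_distrib_right[symmetric] by (simp add: mult.commute)
  also have "\<dots> \<le> (\<Sum>n\<in>J. measure lborel (E n \<inter> {u..v}))"
    unfolding E_def using large by (intro sum_mono measure_approx_set_Icc_ge \<phi>_nonneg \<phi>_le)
  finally show ?thesis .
qed

text \<open>The second moment method: the first moment is of order \<open>L S\<close>, the second one at most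
  \<open>(L / r\<^sup>2) S\<^sup>2 + C S\<close>, so once \<open>S \<ge> C r\<^sup>2 / L\<close> the Chung--Erdos inequality bounds the
  measure of the union below by a fixed multiple of \<open>L\<close>.\<close>

lemma measure_UN_E_Icc_ge:
  assumes J: "finite J" and uv: "u < v"
    and large: "\<And>n. n \<in> J \<Longrightarrow> 2 * r + 6 * R \<le> \<bar>\<alpha> ^ n\<bar> * (v - u)"
    and mass: "(2 * (v - u) / r + 8) * (1 + 2 * ((\<bar>\<alpha>\<bar> + 1) / (\<bar>\<alpha>\<bar> - 1))) * r\<^sup>2
      \<le> (\<Sum>n\<in>J. \<phi> n) * (v - u)"
  shows "r\<^sup>2 / (18 * R\<^sup>2) * (v - u) \<le> measure lborel (\<Union>n\<in>J. E n \<inter> {u..v})"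
proof -
  define L where "L = v - u"
  define C where "C = (2 * L / r + 8) * (1 + 2 * ((\<bar>\<alpha>\<bar> + 1) / (\<bar>\<alpha>\<bar> - 1)))"
  define S where "S = (\<Sum>n\<in>J. \<phi> n)"
  define A where "A n = E n \<inter> {u..v}" for n
  define M where "M = measure lborel (\<Union>n\<in>J. A n)"
  have L: "L > 0" using uv by (simp add: L_def)
  have "0 < C * r\<^sup>2"
    unfolding C_def using L r_pos expanding by (intro mult_pos_pos add_pos_nonneg) auto
  with mass have "0 < S * L" by (simp add: C_def L_def S_def)
  then have S: "S > 0" using L by (simp add: zero_less_mult_iff)
  have "A m \<inter> A n = E m \<inter> E n \<inter> {u..v}" for m n by (auto simp: A_def)
  then have second_moment: "(\<Sum>m\<in>J. \<Sum>n\<in>J. measure lborel (A m \<inter> A n)) \<le> L / r\<^sup>2 * S\<^sup>2 + C * S"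
    using sum_measure_E_Int_E_Icc_le[OF J] uv by (simp add: L_def S_def C_def)
  have "(L * S / (3 * R))\<^sup>2 \<le> (\<Sum>n\<in>J. measure lborel (A n))\<^sup>2"
    using sum_measure_E_Icc_ge[OF large] L R_pos S by (intro power_mono) (auto simp: A_def L_def S_def)
  also have "\<dots> \<le> M * (\<Sum>m\<in>J. \<Sum>n\<in>J. measure lborel (A m \<inter> A n))"
    unfolding M_def A_def using J by (intro Chung_Erdos_inequality fmeasurable_Int_Icc E_borel)
  also have "\<dots> \<le> M * (L / r\<^sup>2 * S\<^sup>2 + C * S)"
    unfolding M_def by (intro mult_left_mono second_moment measure_nonneg)
  also have "\<dots> \<le> M * (2 * L / r\<^sup>2 * S\<^sup>2)"
  proof (intro mult_left_mono)
    have "C * S = C * r\<^sup>2 * S / r\<^sup>2" using r_pos by simp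
    also have "\<dots> \<le> S * L * S / r\<^sup>2"
      using mass S by (intro divide_right_mono mult_right_mono) (auto simp: C_def L_def S_def)
    also have "\<dots> = L / r\<^sup>2 * S\<^sup>2" by (simp add: power2_eq_square)
    finally show "L / r\<^sup>2 * S\<^sup>2 + C * S \<le> 2 * L / r\<^sup>2 * S\<^sup>2" by simp
  qed (simp add: M_def)
  finally have "(r\<^sup>2 / (18 * R\<^sup>2) * L) * (2 * L / r\<^sup>2 * S\<^sup>2) \<le> M * (2 * L / r\<^sup>2 * S\<^sup>2)"
    using L R_pos r_pos by (simp add: field_simps power2_eq_square)
  then have "r\<^sup>2 / (18 * R\<^sup>2) * L \<le> M"
    by (rule mult_right_le_imp_le) (use L r_pos S in simp)
  then show ?thesis by (simp add: L_def M_def A_def)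
qed

lemma measure_tail_Int_Icc_ge:
  assumes divergent: "\<not> summable \<phi>" and uv: "u < v"
  shows "r\<^sup>2 / (18 * R\<^sup>2) * (v - u) \<le> measure lborel ((\<Union>n\<in>{k..}. E n) \<inter> {u..v})"
proof -
  define C where "C = (2 * (v - u) / r + 8) * (1 + 2 * ((\<bar>\<alpha>\<bar> + 1) / (\<bar>\<alpha>\<bar> - 1)))"
  obtain k0 where k0: "(2 * r + 6 * R) / (v - u) < \<bar>\<alpha>\<bar> ^ k0"
    using real_arch_pow[OF expanding] by blast
  obtain N where N: "C * r\<^sup>2 / (v - u) \<le> (\<Sum>n = max k k0..N. \<phi> n)"
    using not_summable_imp_sum_atLeastAtMost_unbounded[OF \<phi>_nonneg divergent] by blast
  have large: "2 * r + 6 * R \<le> \<bar>\<alpha> ^ n\<bar> * (v - u)" if "n \<in> {max k k0..N}" for n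
  proof -
    have "\<bar>\<alpha>\<bar> ^ k0 * (v - u) \<le> \<bar>\<alpha> ^ n\<bar> * (v - u)"
      using that expanding uv by (intro mult_right_mono) (auto simp: power_abs power_increasing)
    moreover have "2 * r + 6 * R < \<bar>\<alpha>\<bar> ^ k0 * (v - u)"
      using k0 uv by (simp add: divide_less_eq)
    ultimately show ?thesis by linarith
  qed
  have "r\<^sup>2 / (18 * R\<^sup>2) * (v - u) \<le> measure lborel (\<Union>n\<in>{max k k0..N}. E n \<inter> {u..v})"
    using N uv by (intro measure_UN_E_Icc_ge large) (auto simp: C_def pos_divide_le_eq)
  also have "\<dots> \<le> measure lborel ((\<Union>n\<in>{k..}. E n) \<inter> {u..v})"
    using fmeasurable_Int_Icc[of "\<Union>n\<in>{k..}. E n"] E_borel fmeasurable_Int_Icc[OF E_borel]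
    by (intro measure_mono_fmeasurable) (auto intro: fmeasurableD)
  finally show ?thesis .
qed

lemma AE_infinite_hits_of_not_summable:
  assumes divergent: "\<not> summable \<phi>"
  shows "AE x in lborel. infinite {n. x \<in> E n}"
proof -
  define W where "W = (\<Inter>k. \<Union>n\<in>{k..}. E n)"
  have tail: "(\<Union>n\<in>{k..}. E n) \<in> sets borel" for k
    using E_borel by (intro sets.countable_UN'') auto
  have W: "W \<in> sets borel" unfolding W_def using tail by (intro sets.countable_INT') auto
  have "r\<^sup>2 / (18 * R\<^sup>2) * (v - u) \<le> measure lborel (W \<inter> {u..v})" if "u < v" for u v
  proof -
    define B where "B k = (\<Union>n\<in>{k..}. E n) \<inter> {u..v}" for k
    have "(\<lambda>k. measure lborel (B k)) \<longlonglongrightarrow> measure lborel (\<Inter>k. B k)"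
    proof (rule Lim_measure_decseq)
      show "range B \<subseteq> sets lborel" using tail by (auto simp: B_def)
      show "decseq B" unfolding B_def decseq_def by (auto intro: order_trans)
      show "emeasure lborel (B k) \<noteq> \<infinity>" for k
        using fmeasurableD2[OF fmeasurable_Int_Icc[OF tail]] by (simp add: B_def)
    qed
    moreover have "(\<Inter>k. B k) = W \<inter> {u..v}" by (auto simp: B_def W_def)
    ultimately show ?thesis
      using measure_tail_Int_Icc_ge[OF divergent that] by (intro LIMSEQ_le_const) (auto simp: B_def)
  qed
  then have "AE x in lborel. x \<in> W"
    using r_pos R_pos by (intro AE_in_of_uniform_density_Icc[OF W, of "r\<^sup>2 / (18 * R\<^sup>2)"]) auto
  then show ?thesis
    by (rule eventually_mono) (auto simp: W_def infinite_nat_iff_unbounded_le)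
qed

end

lemma infinite_approx_pairs_of_infinite_hits:
  assumes "infinite {n. x \<in> approx_set Y (\<alpha> ^ n) (\<phi> n)}" and "\<And>n. n \<ge> 1 \<Longrightarrow> \<phi> n \<le> \<psi> n"
  shows "infinite (approx_pairs Y \<psi> \<alpha> x)"
proof
  assume "finite (approx_pairs Y \<psi> \<alpha> x)"
  moreover have "{n. x \<in> approx_set Y (\<alpha> ^ n) (\<phi> n)} \<subseteq> insert 0 (fst ` approx_pairs Y \<psi> \<alpha> x)"
  proof
    fix n assume "n \<in> {n. x \<in> approx_set Y (\<alpha> ^ n) (\<phi> n)}"
    then obtain y where "y \<in> Y" "\<bar>\<alpha> ^ n * x - y\<bar> \<le> \<phi> n" by (auto simp: approx_set_def)
    then show "n \<in> insert 0 (fst ` approx_pairs Y \<psi> \<alpha> x)"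
      using assms(2)[of n] by (cases "n = 0") (force simp: approx_pairs_def)+
  qed
  ultimately show False using assms(1) finite_subset by blast
qed

context dilation_setting
begin

lemma AE_infinite_approx_pairs:
  assumes \<psi>: "\<And>n. n \<ge> 1 \<Longrightarrow> 0 \<le> \<psi> n" and divergent: "\<not> summable (\<lambda>n. \<psi> (Suc n))"
  shows "AE x in lborel. infinite (approx_pairs Y \<psi> \<alpha> x)"
proof -
  \<comment> \<open>truncation keeps the target intervals shorter than the gaps of \<open>Y\<close>; divergence survives it\<close>
  define \<phi> where "\<phi> n = (if n = 0 then 0 else min (\<psi> n) (r / 2))" for n
  interpret small_radii_setting Y r R \<alpha> \<phi>
  proof
    show "0 \<le> \<phi> n" "\<phi> n \<le> r / 2" for n using \<psi>[of n] r_pos by (auto simp: \<phi>_def)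
  qed
  have "\<not> summable (\<lambda>n. min (\<psi> (Suc n)) (r / 2))"
    using divergent r_pos by (intro not_summable_min) auto
  then have "\<not> summable (\<lambda>n. \<phi> (Suc n))" by (simp add: \<phi>_def)
  then have "\<not> summable \<phi>" by (simp add: summable_Suc_iff)
  from AE_infinite_hits_of_not_summable[OF this]
  have "AE x in lborel. infinite {n. x \<in> approx_set Y (\<alpha> ^ n) (\<phi> n)}"
    by (simp add: E_def)
  then show ?thesis
    by (rule eventually_mono) (erule infinite_approx_pairs_of_infinite_hits, simp add: \<phi>_def)
qed

end

theorem mainTheorem1:
  fixes Y :: "real set" and \<psi> :: "nat \<Rightarrow> real" and \<alpha> :: real
  assumes "delone Y"
    and "\<And>n. n \<ge> 1 \<Longrightarrow> \<psi> n \<ge> 0"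
    and "\<bar>\<alpha>\<bar> > 1"
  shows "(summable (\<lambda>n. \<psi> (Suc n)) \<longrightarrow>
           (AE x in lborel. finite (approx_pairs Y \<psi> \<alpha> x)))
       \<and> (\<not> summable (\<lambda>n. \<psi> (Suc n)) \<longrightarrow>
           (AE x in lborel. infinite (approx_pairs Y \<psi> \<alpha> x)))"
proof -
  obtain r R where "delone_bounds Y r R"
    using delone_bounds_of_delone[OF assms(1)] .
  then interpret dilation_setting Y r R \<alpha>
    using assms(3) by (simp add: dilation_setting_def dilation_setting_axioms_def)
  show ?thesis
    using AE_finite_approx_pairs[of \<psi>] AE_infinite_approx_pairs[of \<psi>] assms(2) by blast
qed

end
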